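(* In the standing setup, let $B=\alpha I+\beta A+\gamma A^2$ ($\alpha,\beta,\gamma\in\mathbb R$) satisfy $B^2=I$, and let $g(x)=B^{\rm T}f_0(x)$ be the associated vector field. Then for all $x\in\mathbb R^6$: $g'(x)g(x)=f_0'(x)f_0(x)$ and $(g'(x))^2=(f_0'(x))^2$.
   Context: Standing setup: $J=\begin{pmatrix}0&I_3\\-I_3&0\end{pmatrix}$ ($6\times6$). $A$ is a fixed real $6\times 6$ skew-Hamiltonian matrix, i.e. $A^{\rm T}J=JA$. $\nabla H$ denotes the gradient and $\nabla^2H$ the Hesse matrix. $H_0$ is a homogeneous cubic polynomial on $\mathbb R^6$ with $A\nabla^2H_0(x)=\nabla^2H_0(x)A^{\rm T}$ for all $x$, and $H_1,H_2$ are homogeneous cubic polynomials with $\nabla H_1=A\nabla H_0$, $\nabla H_2=A\nabla H_1$. Set $f_i=J\nabla H_i$; primes denote Jacobi matrices. Associated vector field: if $B=\alpha I+\beta A+\gamma A^2$ satisfies $B^2=I$, then $g(x)=JB\nabla H_0(x)=B^{\rm T}f_0(x)$ is called associated to $f_0$; it equals $J\nabla K$ with $K=\alpha H_0+\beta H_1+\gamma H_2$. *)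

theory Defs
  imports "HOL-Analysis.Analysis"
begin

type_synonym vec6 = "real ^ 6"
type_synonym mat6 = "real ^ 6 ^ 6"

text \<open>The symplectic matrix J = [[0, I3], [-I3, 0]]; indices of type 6 are 1,2,3,4,5,6 (= 0).\<close>
definition Jmat :: mat6 where
  "Jmat = (\<chi> i j. if i \<in> {1,2,3} \<and> j = i + 3 then 1
                  else if j \<in> {1,2,3} \<and> i = j + 3 then -1 else (0::real))"

definition hom_cubic :: "(vec6 \<Rightarrow> real) \<Rightarrow> bool" where
  "hom_cubic H \<longleftrightarrow> (\<exists>c :: 6 \<Rightarrow> 6 \<Rightarrow> 6 \<Rightarrow> real.
      \<forall>x. H x = (\<Sum>i\<in>UNIV. \<Sum>j\<in>UNIV. \<Sum>k\<in>UNIV. c i j k * x$i * x$j * x$k))"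

definition grad :: "(vec6 \<Rightarrow> real) \<Rightarrow> vec6 \<Rightarrow> vec6" where
  "grad H x = (\<chi> i. frechet_derivative H (at x) (axis i 1))"

definition hess :: "(vec6 \<Rightarrow> real) \<Rightarrow> vec6 \<Rightarrow> mat6" where
  "hess H x = jacobian (grad H) (at x)"

end

theory Submission
  imports Defs
begin

text \<open>Write \<open>T = B\<^sup>T\<close> and \<open>M = \<nabla>\<^sup>2H\<^sub>0(x)\<close>, so \<open>f\<^sub>0'(x) = J M\<close> and \<open>g'(x) = T J M\<close>.
  Being quadratic polynomials in \<open>A\<close>, \<open>B\<close> inherits the two intertwining relations
  \<open>A\<^sup>T J = J A\<close> and \<open>A M = M A\<^sup>T\<close> as \<open>T J = J B\<close> and \<open>B M = M T\<close>. Together with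
  \<open>T\<^sup>2 = I\<close> they give \<open>T (J M) T = J M\<close>, i.e. \<open>g'(x) T = f\<^sub>0'(x)\<close>; since \<open>g = T f\<^sub>0\<close>, both
  identities follow at once.\<close>

lemma has_derivative_cubic_form:
  fixes c :: "'n::finite \<Rightarrow> 'n \<Rightarrow> 'n \<Rightarrow> real"
  shows "((\<lambda>x::real^'n. \<Sum>i\<in>UNIV. \<Sum>j\<in>UNIV. \<Sum>k\<in>UNIV. c i j k * x$i * x$j * x$k) has_derivative
     (\<lambda>v. \<Sum>i\<in>UNIV. \<Sum>j\<in>UNIV. \<Sum>k\<in>UNIV.
            c i j k * (v$i * y$j * y$k + y$i * v$j * y$k + y$i * y$j * v$k))) (at y)"
proof -
  have nth: "((\<lambda>x::real^'n. x$i) has_derivative (\<lambda>v. v$i)) (at y)" for i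
    by (rule bounded_linear_imp_has_derivative[OF bounded_linear_vec_nth])
  show ?thesis
    by (rule nth | rule refl | rule derivative_eq_intros)+
       (simp add: fun_eq_iff algebra_simps sum.distrib)
qed

lemma polynomial_function_grad:
  assumes "hom_cubic H"
  shows "polynomial_function (grad H)"
proof -
  obtain c where H: "H = (\<lambda>x. \<Sum>i\<in>UNIV. \<Sum>j\<in>UNIV. \<Sum>k\<in>UNIV. c i j k * x$i * x$j * x$k)"
    using assms unfolding hom_cubic_def by blast
  have nth: "real_polynomial_function (\<lambda>y::vec6. y$i)" for i
    by (rule real_polynomial_function.intros(1)[OF bounded_linear_vec_nth])
  have "real_polynomial_function (\<lambda>y. grad H y $ l)" for l
  proof -
    have "grad H y $ l = (\<Sum>i\<in>UNIV. \<Sum>j\<in>UNIV. \<Sum>k\<in>UNIV. c i j k *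
        (axis l 1 $ i * y$j * y$k + y$i * axis l 1 $ j * y$k + y$i * y$j * axis l 1 $ k))"
      for y :: vec6
      unfolding grad_def H frechet_derivative_at[OF has_derivative_cubic_form, symmetric] by simp
    then show ?thesis
      by (simp only:) (intro real_polynomial_function_sum finite_UNIV
          real_polynomial_function.intros(2-4) nth; simp)
  qed
  then show ?thesis
    by (simp add: polynomial_function_iff_Basis_inner Basis_vec_def inner_axis)
qed

lemma jacobian_matrix_vector_mult:
  fixes f :: "real^'n \<Rightarrow> real^'m" and P :: "real^'m^'k"
  assumes "f differentiable at x"
  shows "jacobian (\<lambda>y. P *v f y) (at x) = P ** jacobian f (at x)"
proof -
  have "(f has_derivative (\<lambda>v. jacobian f (at x) *v v)) (at x)"
    using assms jacobian_works by blast
  then have "((\<lambda>y. P *v f y) has_derivative (\<lambda>v. P *v (jacobian f (at x) *v v))) (at x)"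
    by (rule bounded_linear.has_derivative[OF matrix_vector_mul_bounded_linear])
  then show ?thesis
    unfolding jacobian_def by (simp add: frechet_derivative_at[symmetric] matrix_vector_mul_assoc)
qed

lemma matrix_add_rdistrib: "(A + B) ** C = A ** C + B ** (C :: 'a::semiring_1^'p^'n)"
  by (vector matrix_matrix_mult_def sum.distrib[symmetric] field_simps)

lemma transpose_add: "transpose (A + B) = transpose A + transpose B"
  by (vector transpose_def)

lemma quadratic_matrix_poly_intertwine:
  fixes X M Y :: "real^'n^'n"
  assumes "X ** M = M ** Y"
  shows "(mat a + b *\<^sub>R X + c *\<^sub>R (X ** X)) ** M = M ** (mat a + b *\<^sub>R Y + c *\<^sub>R (Y ** Y))"
proof -
  have "mat a ** M = M ** mat a"
    by (simp add: matrix_matrix_mult_def mat_def if_distrib if_distribR mult.commute vec_eq_iff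
        cong: if_cong)
  moreover have "X ** X ** M = M ** Y ** Y"
    using assms by (metis matrix_mul_assoc)
  ultimately show ?thesis
    using assms
    by (simp add: matrix_add_ldistrib matrix_add_rdistrib matrix_mul_assoc
        scalar_matrix_assoc[symmetric] matrix_scalar_ac)
qed

lemma involution_conjugation:
  fixes T B J M :: "real^'n^'n"
  assumes "T ** T = mat 1" and "T ** J = J ** B" and "B ** M = M ** T"
  shows "T ** (J ** M) ** T = J ** M"
proof -
  have "T ** (J ** M) ** T = J ** (B ** M) ** T"
    using assms(2) by (simp add: matrix_mul_assoc)
  also have "\<dots> = J ** M ** (T ** T)"
    using assms(3) by (simp add: matrix_mul_assoc)
  finally show ?thesis
    using assms(1) by simp
qed

theorem mainTheorem4:
  fixes A B :: mat6 and H0 H1 H2 :: "vec6 \<Rightarrow> real"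
    and \<alpha> \<beta> \<gamma> :: real and f0 g :: "vec6 \<Rightarrow> vec6"
  assumes skew_ham: "transpose A ** Jmat = Jmat ** A"
    and H0: "hom_cubic H0"
    and H0_comm: "\<forall>x. A ** hess H0 x = hess H0 x ** transpose A"
    and H1: "hom_cubic H1" and H1_grad: "\<forall>x. grad H1 x = A *v grad H0 x"
    and H2: "hom_cubic H2" and H2_grad: "\<forall>x. grad H2 x = A *v grad H1 x"
    and f0_def: "\<forall>x. f0 x = Jmat *v grad H0 x"
    and B_def: "B = mat \<alpha> + \<beta> *\<^sub>R A + \<gamma> *\<^sub>R (A ** A)"
    and B_inv: "B ** B = mat 1"
    and g_def: "\<forall>x. g x = transpose B *v f0 x"
  shows "\<forall>x. jacobian g (at x) *v g x = jacobian f0 (at x) *v f0 x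
           \<and> jacobian g (at x) ** jacobian g (at x) = jacobian f0 (at x) ** jacobian f0 (at x)"
proof
  fix x
  let ?T = "transpose B" and ?M = "hess H0 x"
  have T_def: "?T = mat \<alpha> + \<beta> *\<^sub>R transpose A + \<gamma> *\<^sub>R (transpose A ** transpose A)"
    unfolding B_def by (simp add: transpose_add transpose_scalar matrix_transpose_mul)
  have TT: "?T ** ?T = mat 1"
    using B_inv by (metis matrix_transpose_mul transpose_mat)
  have TJ: "?T ** Jmat = Jmat ** B"
    using quadratic_matrix_poly_intertwine[OF skew_ham, of \<alpha> \<beta> \<gamma>]
    unfolding T_def[symmetric] B_def[symmetric] .
  have BM: "B ** ?M = ?M ** ?T"
    using quadratic_matrix_poly_intertwine[OF H0_comm[rule_format], of \<alpha> \<beta> \<gamma>]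
    unfolding T_def[symmetric] B_def[symmetric] .
  have f0: "f0 = (\<lambda>y. Jmat *v grad H0 y)" and g: "g = (\<lambda>y. ?T *v f0 y)"
    using f0_def g_def by auto
  have grad_diff: "grad H0 differentiable at x"
    by (rule differentiable_at_polynomial_function[OF polynomial_function_grad[OF H0]])
  have F: "jacobian f0 (at x) = Jmat ** ?M"
    unfolding f0 hess_def by (rule jacobian_matrix_vector_mult[OF grad_diff])
  have "f0 differentiable at x"
    unfolding f0 by (intro differentiable_compose[OF _ grad_diff] bounded_linear_imp_differentiable
        matrix_vector_mul_bounded_linear)
  then have G: "jacobian g (at x) = ?T ** (Jmat ** ?M)"
    unfolding g F[symmetric] by (rule jacobian_matrix_vector_mult)
  have GT: "jacobian g (at x) ** ?T = jacobian f0 (at x)"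
    unfolding G F by (rule involution_conjugation[OF TT TJ BM])
  have "jacobian g (at x) *v g x = (jacobian g (at x) ** ?T) *v f0 x"
    using g_def by (simp add: matrix_vector_mul_assoc del: transpose_matrix_vector)
  moreover have "jacobian g (at x) ** jacobian g (at x) = (jacobian g (at x) ** ?T) ** (Jmat ** ?M)"
    unfolding G by (simp add: matrix_mul_assoc)
  ultimately show "jacobian g (at x) *v g x = jacobian f0 (at x) *v f0 x
      \<and> jacobian g (at x) ** jacobian g (at x) = jacobian f0 (at x) ** jacobian f0 (at x)"
    using GT F by simp
qed

end
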